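(* Let $G$ be a group satisfying the property $\mathsf{FM}$ and $\nu$ a conjugation-invariant pseudo-norm on $G$. Then $A_\nu$, with addition $[\mathtt{g}]+[\mathtt{h}]=[\mathtt{g}\cdot\mathtt{h}]$ and scalar multiplication $\lambda[\mathtt{g}]=[\mathtt{g}^{(\lambda)}]$, is a real vector space, and the function $\|[\mathtt{g}]\|_\nu=\|\mathtt{g}\|_\nu$ is a norm on it; i.e. $(A_\nu,\|\cdot\|_\nu)$ is a normed vector space.
   Context: A conjugation-invariant pseudo-norm on a group $G$ is a function $\nu\colon G\to\mathbb{R}_{\ge0}$ with $\nu(1)=0$, $\nu(f)=\nu(f^{-1})$, $\nu(fg)\le\nu(f)+\nu(g)$ and $\nu(gfg^{-1})=\nu(f)$ for all $f,g\in G$. Property $\mathsf{FM}$: for a subgroup $H\le G$, let $\nu_H(f)$ be the minimal $k$ such that $f=g_1h_1g_1^{-1}\cdots g_kh_kg_k^{-1}$ ($g_i\in G,h_i\in H$), $\infty$ if none; for $K\subset G$ let $\mathrm{D}^f_H(K)$ be the set of $h_0\in G$ such that for all $g_1,\dots,g_k\in G$ there is $h\in G$ with every element of $hh_0h^{-1}K(hh_0h^{-1})^{-1}$ commuting with every element of $\bigcup_i g_iHg_i^{-1}$. $(G,H)$ satisfies $\mathsf{FM}$ if $\nu_H<\infty$ on $G$ and $\mathrm{D}^f_H(h_1Hh_1^{-1}\cup\dots\cup h_kHh_k^{-1})\ne\emptyset$ for all $h_1,\dots,h_k\in G$; $G$ satisfies $\mathsf{FM}$ if some $(G,H)$ does.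 $A_G=\coprod_{k\ge0}(G\times\mathbb{R})^k$, whose elements are written as formal words $g_1^{s_1}\cdots g_k^{s_k}$, with empty word $1$. For $\mathtt{g}=g_1^{s_1}\cdots g_k^{s_k}$, $\mathtt{h}=h_1^{t_1}\cdots h_l^{t_l}$, $\lambda\in\mathbb{R}$: $\mathtt{g}\cdot\mathtt{h}$ is concatenation, $\bar{\mathtt{g}}=g_k^{-s_k}\cdots g_1^{-s_1}$, $\mathtt{g}^{(\lambda)}=g_1^{\lambda s_1}\cdots g_k^{\lambda s_k}$. $\|\mathtt{g}\|_\nu=\lim_{n\to\infty}\frac1n\nu(g_1^{[s_1n]}\cdots g_k^{[s_kn]})$ ($[\cdot]$ integer part), $\|1\|_\nu=0$. $\mathtt{g}\sim\mathtt{h}$ iff $\|\mathtt{g}\cdot\bar{\mathtt{h}}\|_\nu=0$; $A_\nu=A_G/\sim$. *)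

theory Defs
  imports "HOL-Algebra.Group" "HOL-Analysis.Analysis"
begin

definition conj_inv_pseudo_norm :: "('a, 'b) monoid_scheme \<Rightarrow> ('a \<Rightarrow> real) \<Rightarrow> bool" where
  "conj_inv_pseudo_norm G \<nu> \<longleftrightarrow>
     \<nu> \<one>\<^bsub>G\<^esub> = 0 \<and>
     (\<forall>f\<in>carrier G. \<nu> f \<ge> 0) \<and>
     (\<forall>f\<in>carrier G. \<nu> (inv\<^bsub>G\<^esub> f) = \<nu> f) \<and>
     (\<forall>f\<in>carrier G. \<forall>g\<in>carrier G. \<nu> (f \<otimes>\<^bsub>G\<^esub> g) \<le> \<nu> f + \<nu> g) \<and>
     (\<forall>f\<in>carrier G. \<forall>g\<in>carrier G. \<nu> (g \<otimes>\<^bsub>G\<^esub> f \<otimes>\<^bsub>G\<^esub> inv\<^bsub>G\<^esub> g) = \<nu> f)"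

definition conj_set :: "('a, 'b) monoid_scheme \<Rightarrow> 'a \<Rightarrow> 'a set \<Rightarrow> 'a set" where
  "conj_set G g K = {g \<otimes>\<^bsub>G\<^esub> k \<otimes>\<^bsub>G\<^esub> inv\<^bsub>G\<^esub> g | k. k \<in> K}"

text \<open>\<open>\<nu>_H(f) < \<infinity>\<close>: \<open>f\<close> is a finite product of conjugates of elements of \<open>H\<close>.\<close>
definition nuH_finite :: "('a, 'b) monoid_scheme \<Rightarrow> 'a set \<Rightarrow> 'a \<Rightarrow> bool" where
  "nuH_finite G H f \<longleftrightarrow>
     (\<exists>xs. set xs \<subseteq> (\<Union>g\<in>carrier G. conj_set G g H) \<and> f = foldr (\<otimes>\<^bsub>G\<^esub>) xs \<one>\<^bsub>G\<^esub>)"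

definition commute_sets :: "('a, 'b) monoid_scheme \<Rightarrow> 'a set \<Rightarrow> 'a set \<Rightarrow> bool" where
  "commute_sets G A B \<longleftrightarrow> (\<forall>a\<in>A. \<forall>b\<in>B. a \<otimes>\<^bsub>G\<^esub> b = b \<otimes>\<^bsub>G\<^esub> a)"

definition Df :: "('a, 'b) monoid_scheme \<Rightarrow> 'a set \<Rightarrow> 'a set \<Rightarrow> 'a set" where
  "Df G H K = {h0 \<in> carrier G. \<forall>gs. set gs \<subseteq> carrier G \<longrightarrow>
      (\<exists>h\<in>carrier G. commute_sets G
          (conj_set G (h \<otimes>\<^bsub>G\<^esub> h0 \<otimes>\<^bsub>G\<^esub> inv\<^bsub>G\<^esub> h) K)
          (\<Union>g\<in>set gs. conj_set G g H))}"

definition FM_pair :: "('a, 'b) monoid_scheme \<Rightarrow> 'a set \<Rightarrow> bool" where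
  "FM_pair G H \<longleftrightarrow> subgroup H G \<and>
     (\<forall>f\<in>carrier G. nuH_finite G H f) \<and>
     (\<forall>hs. set hs \<subseteq> carrier G \<longrightarrow> Df G H (\<Union>h\<in>set hs. conj_set G h H) \<noteq> {})"

definition FM :: "('a, 'b) monoid_scheme \<Rightarrow> bool" where
  "FM G \<longleftrightarrow> (\<exists>H. FM_pair G H)"

text \<open>A word \<open>g_1^{s_1}\<cdots>g_k^{s_k}\<close> is the list \<open>[(g_1,s_1),\<dots>,(g_k,s_k)]\<close>;
  concatenation is \<open>@\<close>, the empty word is \<open>[]\<close>.\<close>
type_synonym 'a word = "('a \<times> real) list"

definition words :: "('a, 'b) monoid_scheme \<Rightarrow> 'a word set" where
  "words G = {w. set (map fst w) \<subseteq> carrier G}"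

definition wbar :: "'a word \<Rightarrow> 'a word" where
  "wbar w = rev (map (\<lambda>(g, s). (g, - s)) w)"

definition wscale :: "real \<Rightarrow> 'a word \<Rightarrow> 'a word" where
  "wscale c w = map (\<lambda>(g, s). (g, c * s)) w"

definition word_eval :: "('a, 'b) monoid_scheme \<Rightarrow> 'a word \<Rightarrow> nat \<Rightarrow> 'a" where
  "word_eval G w n =
     foldr (\<lambda>(g, s) acc. (g [^]\<^bsub>G\<^esub> (\<lfloor>s * real n\<rfloor>)) \<otimes>\<^bsub>G\<^esub> acc) w \<one>\<^bsub>G\<^esub>"

definition word_seq :: "('a, 'b) monoid_scheme \<Rightarrow> ('a \<Rightarrow> real) \<Rightarrow> 'a word \<Rightarrow> nat \<Rightarrow> real" where
  "word_seq G \<nu> w n = \<nu> (word_eval G w n) / real n"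

definition wnorm :: "('a, 'b) monoid_scheme \<Rightarrow> ('a \<Rightarrow> real) \<Rightarrow> 'a word \<Rightarrow> real" where
  "wnorm G \<nu> w = (if w = [] then 0 else lim (word_seq G \<nu> w))"

definition wrel :: "('a, 'b) monoid_scheme \<Rightarrow> ('a \<Rightarrow> real) \<Rightarrow> ('a word \<times> 'a word) set" where
  "wrel G \<nu> = {(g, h). g \<in> words G \<and> h \<in> words G \<and> wnorm G \<nu> (g @ wbar h) = 0}"

definition Anu :: "('a, 'b) monoid_scheme \<Rightarrow> ('a \<Rightarrow> real) \<Rightarrow> 'a word set set" where
  "Anu G \<nu> = words G // wrel G \<nu>"

definition rep :: "'a word set \<Rightarrow> 'a word" where
  "rep X = (SOME x. x \<in> X)"

definition qadd :: "('a, 'b) monoid_scheme \<Rightarrow> ('a \<Rightarrow> real) \<Rightarrow> 'a word set \<Rightarrow> 'a word set \<Rightarrow> 'a word set" where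
  "qadd G \<nu> X Y = wrel G \<nu> `` {rep X @ rep Y}"

definition qscale :: "('a, 'b) monoid_scheme \<Rightarrow> ('a \<Rightarrow> real) \<Rightarrow> real \<Rightarrow> 'a word set \<Rightarrow> 'a word set" where
  "qscale G \<nu> c X = wrel G \<nu> `` {wscale c (rep X)}"

definition qzero :: "('a, 'b) monoid_scheme \<Rightarrow> ('a \<Rightarrow> real) \<Rightarrow> 'a word set" where
  "qzero G \<nu> = wrel G \<nu> `` {[]}"

definition qnorm :: "('a, 'b) monoid_scheme \<Rightarrow> ('a \<Rightarrow> real) \<Rightarrow> 'a word set \<Rightarrow> real" where
  "qnorm G \<nu> X = wnorm G \<nu> (rep X)"

definition real_vector_space_on ::
  "'v set \<Rightarrow> ('v \<Rightarrow> 'v \<Rightarrow> 'v) \<Rightarrow> (real \<Rightarrow> 'v \<Rightarrow> 'v) \<Rightarrow> 'v \<Rightarrow> bool" where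
  "real_vector_space_on V add sc z \<longleftrightarrow>
     z \<in> V \<and>
     (\<forall>x\<in>V. \<forall>y\<in>V. add x y \<in> V) \<and>
     (\<forall>a. \<forall>x\<in>V. sc a x \<in> V) \<and>
     (\<forall>x\<in>V. \<forall>y\<in>V. \<forall>w\<in>V. add (add x y) w = add x (add y w)) \<and>
     (\<forall>x\<in>V. \<forall>y\<in>V. add x y = add y x) \<and>
     (\<forall>x\<in>V. add x z = x) \<and>
     (\<forall>x\<in>V. \<exists>y\<in>V. add x y = z) \<and>
     (\<forall>a. \<forall>x\<in>V. \<forall>y\<in>V. sc a (add x y) = add (sc a x) (sc a y)) \<and>
     (\<forall>a b. \<forall>x\<in>V. sc (a + b) x = add (sc a x) (sc b x)) \<and>
     (\<forall>a b. \<forall>x\<in>V. sc (a * b) x = sc a (sc b x)) \<and>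
     (\<forall>x\<in>V. sc 1 x = x)"

definition real_normed_space_on ::
  "'v set \<Rightarrow> ('v \<Rightarrow> 'v \<Rightarrow> 'v) \<Rightarrow> (real \<Rightarrow> 'v \<Rightarrow> 'v) \<Rightarrow> 'v \<Rightarrow> ('v \<Rightarrow> real) \<Rightarrow> bool" where
  "real_normed_space_on V add sc z nrm \<longleftrightarrow>
     real_vector_space_on V add sc z \<and>
     (\<forall>x\<in>V. nrm x \<ge> 0) \<and>
     (\<forall>x\<in>V. nrm x = 0 \<longleftrightarrow> x = z) \<and>
     (\<forall>x\<in>V. \<forall>y\<in>V. nrm (add x y) \<le> nrm x + nrm y) \<and>
     (\<forall>a. \<forall>x\<in>V. nrm (sc a x) = \<bar>a\<bar> * nrm x)"

end

theory Submission
  imports Defs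
begin

text \<open>
  The limit \<open>\<parallel>w\<parallel> = lim \<nu>(w(n))/n\<close> exists by Fekete's lemma, because \<open>n \<mapsto> \<nu>(w(n))\<close> is
  subadditive up to a constant: \<open>w(m+n)\<close> differs from \<open>w(m) w(n)\<close> by one rounding error per
  letter and by a reordering of the powers of the letters. Property FM supplies, for any \<open>f, g\<close>,
  a conjugate \<open>c f c\<^sup>-\<^sup>1\<close> commuting with \<open>g\<close>; as \<open>\<nu>\<close> is conjugation invariant, this bounds
  \<open>\<nu>([f\<^sup>a, g\<^sup>b])\<close> by \<open>4 \<nu>(c)\<close> uniformly in \<open>a, b\<close>, so reordering a product of \<open>N\<close> such powers
  costs \<open>O(N\<^sup>2)\<close>, independently of \<open>n\<close>. The same estimates, divided by \<open>n\<close>, show that \<open>\<parallel>\<cdot>\<parallel>\<close> is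
  invariant under permuting letters, subadditive under concatenation, homogeneous under scaling,
  and zero on words with bounded evaluations such as \<open>w @ wbar w\<close>; these make \<open>\<sim>\<close> a congruence
  whose quotient is a normed space.
\<close>

section \<open>Commuting conjugates under property FM\<close>

context group
begin

lemma conjugation_group_hom:
  assumes "c \<in> carrier G"
  shows "group_hom G G (\<lambda>x. c \<otimes> x \<otimes> inv c)"
proof -
  have cancel: "a \<otimes> inv c \<otimes> c = a" if "a \<in> carrier G" for a
    using assms that by (simp add: m_assoc)
  have "c \<otimes> (x \<otimes> y) \<otimes> inv c = c \<otimes> x \<otimes> inv c \<otimes> (c \<otimes> y \<otimes> inv c)"
    if "x \<in> carrier G" "y \<in> carrier G" for x y
    using assms that by (simp add: m_assoc[symmetric] cancel)
  then show ?thesis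
    using assms by (auto intro!: homI simp: group_hom_def group_hom_axioms_def is_group)
qed

lemma conj_int_pow:
  "\<lbrakk>x \<in> carrier G; c \<in> carrier G\<rbrakk> \<Longrightarrow> c \<otimes> x [^] (k::int) \<otimes> inv c = (c \<otimes> x \<otimes> inv c) [^] k"
  using group_hom.hom_int_pow[OF conjugation_group_hom] by blast

lemma conj_eq_iff_commute:
  "\<lbrakk>x \<in> carrier G; c \<in> carrier G\<rbrakk> \<Longrightarrow> c \<otimes> x \<otimes> inv c = x \<longleftrightarrow> c \<otimes> x = x \<otimes> c"
  by (metis inv_solve_right m_closed)

lemma commute_int_pow:
  assumes "x \<in> carrier G" "y \<in> carrier G" "x \<otimes> y = y \<otimes> x"
  shows "x [^] (k::int) \<otimes> y = y \<otimes> x [^] k"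
proof -
  have "y \<otimes> x \<otimes> inv y = x"
    using assms by (simp add: conj_eq_iff_commute)
  then have "y \<otimes> x [^] k \<otimes> inv y = x [^] k"
    using assms by (simp add: conj_int_pow)
  then show ?thesis
    using assms by (simp add: conj_eq_iff_commute)
qed

lemma commute_int_pows:
  assumes "x \<in> carrier G" "y \<in> carrier G" "x \<otimes> y = y \<otimes> x"
  shows "x [^] (k::int) \<otimes> y [^] (l::int) = y [^] l \<otimes> x [^] k"
  using assms commute_int_pow[of y "x [^] k" l] commute_int_pow[of x y k] by simp

lemma foldr_mult_closed: "set xs \<subseteq> carrier G \<Longrightarrow> foldr (\<otimes>) xs \<one> \<in> carrier G"
  by (induction xs) auto

lemma foldr_mult_commute:
  assumes "set xs \<subseteq> carrier G" "g \<in> carrier G" "\<And>x. x \<in> set xs \<Longrightarrow> x \<otimes> g = g \<otimes> x"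
  shows "foldr (\<otimes>) xs \<one> \<otimes> g = g \<otimes> foldr (\<otimes>) xs \<one>"
  using assms
proof (induction xs)
  case (Cons x xs)
  let ?P = "foldr (\<otimes>) xs \<one>"
  have P: "?P \<in> carrier G" and x: "x \<in> carrier G"
    using Cons.prems by (auto intro: foldr_mult_closed)
  have "foldr (\<otimes>) (x # xs) \<one> \<otimes> g = x \<otimes> (?P \<otimes> g)"
    using P x Cons.prems(2) by (simp add: m_assoc)
  also have "\<dots> = x \<otimes> (g \<otimes> ?P)"
    using Cons by simp
  also have "\<dots> = (x \<otimes> g) \<otimes> ?P"
    using P x Cons.prems(2) by (simp add: m_assoc)
  also have "\<dots> = g \<otimes> foldr (\<otimes>) (x # xs) \<one>"
    using P x Cons.prems by (simp add: m_assoc)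
  finally show ?case .
qed simp

end

lemma (in group_hom) hom_foldr_mult:
  "set xs \<subseteq> carrier G \<Longrightarrow> h (foldr (\<otimes>) xs \<one>) = foldr (\<otimes>\<^bsub>H\<^esub>) (map h xs) \<one>\<^bsub>H\<^esub>"
  by (induction xs) (auto simp: G.foldr_mult_closed)

lemma list_covered_by_finitely_many:
  "set xs \<subseteq> (\<Union>a\<in>A. F a) \<Longrightarrow> \<exists>as. set as \<subseteq> A \<and> set xs \<subseteq> (\<Union>a\<in>set as. F a)"
proof (induction xs)
  case (Cons x xs)
  then obtain as a where "set as \<subseteq> A" "set xs \<subseteq> (\<Union>a\<in>set as. F a)" "a \<in> A" "x \<in> F a"
    by auto
  then show ?case
    by (intro exI[of _ "a # as"]) auto
qed (rule exI[of _ "[]"], simp)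

lemma (in group) conj_set_subset:
  "\<lbrakk>a \<in> carrier G; K \<subseteq> carrier G\<rbrakk> \<Longrightarrow> conj_set G a K \<subseteq> carrier G"
  unfolding conj_set_def by auto

lemma (in group) nuH_finite_conjugators:
  assumes "subgroup H G" "nuH_finite G H f"
  obtains xs hs where "set hs \<subseteq> carrier G" "set xs \<subseteq> (\<Union>h\<in>set hs. conj_set G h H)"
    "set xs \<subseteq> carrier G" "f = foldr (\<otimes>) xs \<one>"
proof -
  obtain xs where xs: "set xs \<subseteq> (\<Union>g\<in>carrier G. conj_set G g H)" "f = foldr (\<otimes>) xs \<one>"
    using assms(2) unfolding nuH_finite_def by blast
  obtain hs where hs: "set hs \<subseteq> carrier G" "set xs \<subseteq> (\<Union>h\<in>set hs. conj_set G h H)"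
    using list_covered_by_finitely_many[OF xs(1)] by blast
  moreover have "set xs \<subseteq> carrier G"
    using hs conj_set_subset[OF _ subgroup.subset[OF assms(1)]] by blast
  ultimately show ?thesis
    using that xs(2) by blast
qed

lemma (in group) FM_conjugate_commute:
  assumes "FM G" "f \<in> carrier G" "g \<in> carrier G"
  obtains c where "c \<in> carrier G" "(c \<otimes> f \<otimes> inv c) \<otimes> g = g \<otimes> (c \<otimes> f \<otimes> inv c)"
proof -
  obtain H where "FM_pair G H"
    using assms(1) unfolding FM_def by blast
  then have H: "subgroup H G" "\<And>f. f \<in> carrier G \<Longrightarrow> nuH_finite G H f"
    "\<And>hs. set hs \<subseteq> carrier G \<Longrightarrow> Df G H (\<Union>h\<in>set hs. conj_set G h H) \<noteq> {}"
    unfolding FM_pair_def by auto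
  obtain xs hs where xs: "set hs \<subseteq> carrier G" "set xs \<subseteq> (\<Union>h\<in>set hs. conj_set G h H)"
    "set xs \<subseteq> carrier G" "f = foldr (\<otimes>) xs \<one>"
    using H(2)[OF assms(2)] by (rule nuH_finite_conjugators[OF H(1)])
  obtain ys ks where ys: "set ks \<subseteq> carrier G" "set ys \<subseteq> (\<Union>k\<in>set ks. conj_set G k H)"
    "set ys \<subseteq> carrier G" "g = foldr (\<otimes>) ys \<one>"
    using H(2)[OF assms(3)] by (rule nuH_finite_conjugators[OF H(1)])
  \<comment> \<open>An element of \<open>D^f_H\<close> for the conjugates making up \<open>f\<close> yields a conjugation moving
    each of them into the centralizer of the conjugates making up \<open>g\<close>.\<close>
  define K where "K = (\<Union>h\<in>set hs. conj_set G h H)"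
  obtain h0 where "h0 \<in> Df G H K"
    using H(3)[OF xs(1)] unfolding K_def by blast
  then have h0: "h0 \<in> carrier G" and "\<forall>gs. set gs \<subseteq> carrier G \<longrightarrow> (\<exists>h\<in>carrier G.
      commute_sets G (conj_set G (h \<otimes> h0 \<otimes> inv h) K) (\<Union>g\<in>set gs. conj_set G g H))"
    unfolding Df_def by (blast dest: CollectD)+
  then obtain h where h: "h \<in> carrier G" and
    commute: "commute_sets G (conj_set G (h \<otimes> h0 \<otimes> inv h) K) (\<Union>k\<in>set ks. conj_set G k H)"
    using ys(1) by blast
  define c where "c = h \<otimes> h0 \<otimes> inv h"
  have c: "c \<in> carrier G"
    using h h0 by (simp add: c_def)
  have conj_commute: "a \<otimes> y = y \<otimes> a" if "a \<in> conj_set G c K" "y \<in> set ys" for a y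
    using commute that ys(2) unfolding commute_sets_def c_def by blast
  have "(c \<otimes> x \<otimes> inv c) \<otimes> g = g \<otimes> (c \<otimes> x \<otimes> inv c)" if x: "x \<in> set xs" for x
  proof -
    have "c \<otimes> x \<otimes> inv c \<in> conj_set G c K"
      using x xs(2) unfolding conj_set_def K_def by blast
    then have "foldr (\<otimes>) ys \<one> \<otimes> (c \<otimes> x \<otimes> inv c) = (c \<otimes> x \<otimes> inv c) \<otimes> foldr (\<otimes>) ys \<one>"
      using ys(3) x xs(3) c conj_commute by (intro foldr_mult_commute) auto
    then show ?thesis
      unfolding ys(4) by simp
  qed
  then have "foldr (\<otimes>) (map (\<lambda>x. c \<otimes> x \<otimes> inv c) xs) \<one> \<otimes> g
      = g \<otimes> foldr (\<otimes>) (map (\<lambda>x. c \<otimes> x \<otimes> inv c) xs) \<one>"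
    using c xs(3) assms(3) by (intro foldr_mult_commute) auto
  moreover have "c \<otimes> f \<otimes> inv c = foldr (\<otimes>) (map (\<lambda>x. c \<otimes> x \<otimes> inv c) xs) \<one>"
    unfolding xs(4) using group_hom.hom_foldr_mult[OF conjugation_group_hom[OF c] xs(3)] .
  ultimately show ?thesis
    using that c by simp
qed

locale pseudo_normed_group = group G for G :: "('a, 'b) monoid_scheme" (structure) +
  fixes nu :: "'a \<Rightarrow> real"
  assumes pseudo_norm: "conj_inv_pseudo_norm G nu"
begin

lemma nu_one [simp]: "nu \<one> = 0"
  using pseudo_norm by (simp add: conj_inv_pseudo_norm_def)

lemma nu_nonneg: "x \<in> carrier G \<Longrightarrow> 0 \<le> nu x"
  using pseudo_norm by (simp add: conj_inv_pseudo_norm_def)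

lemma nu_inv [simp]: "x \<in> carrier G \<Longrightarrow> nu (inv x) = nu x"
  using pseudo_norm by (simp add: conj_inv_pseudo_norm_def)

lemma nu_mult_le: "\<lbrakk>x \<in> carrier G; y \<in> carrier G\<rbrakk> \<Longrightarrow> nu (x \<otimes> y) \<le> nu x + nu y"
  using pseudo_norm by (simp add: conj_inv_pseudo_norm_def)

lemma nu_conj [simp]: "\<lbrakk>x \<in> carrier G; c \<in> carrier G\<rbrakk> \<Longrightarrow> nu (c \<otimes> x \<otimes> inv c) = nu x"
  using pseudo_norm by (simp add: conj_inv_pseudo_norm_def)

lemma nu_nat_pow_le: "x \<in> carrier G \<Longrightarrow> nu (x [^] (n::nat)) \<le> real n * nu x"
proof (induction n)
  case (Suc n)
  then have "nu (x [^] Suc n) \<le> nu (x [^] n) + nu x"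
    by (simp add: nu_mult_le)
  with Suc show ?case
    by (simp add: distrib_right)
qed simp

lemma nu_int_pow_le:
  assumes "x \<in> carrier G"
  shows "nu (x [^] (k::int)) \<le> \<bar>k\<bar> * nu x"
proof (cases k rule: int_cases)
  case (nonneg n)
  then show ?thesis
    using assms nu_nat_pow_le[of x n] by (simp add: int_pow_int)
next
  case (neg n)
  then show ?thesis
    using assms nu_nat_pow_le[of x "Suc n"] by (simp add: int_pow_neg_int del: of_nat_Suc)
qed

text \<open>Conjugation invariance makes \<open>pdist\<close> invariant under multiplication from both sides.\<close>
definition pdist :: "'a \<Rightarrow> 'a \<Rightarrow> real" where
  "pdist x y = nu (x \<otimes> inv y)"

lemma pdist_self [simp]: "x \<in> carrier G \<Longrightarrow> pdist x x = 0"
  by (simp add: pdist_def)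

lemma pdist_one_right [simp]: "x \<in> carrier G \<Longrightarrow> pdist x \<one> = nu x"
  by (simp add: pdist_def)

lemma pdist_one_left [simp]: "x \<in> carrier G \<Longrightarrow> pdist \<one> x = nu x"
  by (simp add: pdist_def)

lemma pdist_sym: "\<lbrakk>x \<in> carrier G; y \<in> carrier G\<rbrakk> \<Longrightarrow> pdist x y = pdist y x"
  using nu_inv[of "x \<otimes> inv y"] by (simp add: pdist_def inv_mult_group)

lemma pdist_triangle:
  assumes "x \<in> carrier G" "y \<in> carrier G" "z \<in> carrier G"
  shows "pdist x z \<le> pdist x y + pdist y z"
proof -
  have "x \<otimes> inv z = (x \<otimes> inv y) \<otimes> (y \<otimes> inv z)"
    using assms by (simp add: m_assoc[symmetric]) (simp add: m_assoc)
  then show ?thesis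
    using assms nu_mult_le[of "x \<otimes> inv y" "y \<otimes> inv z"] by (simp add: pdist_def)
qed

lemma pdist_mult_left [simp]:
  assumes "x \<in> carrier G" "y \<in> carrier G" "g \<in> carrier G"
  shows "pdist (g \<otimes> x) (g \<otimes> y) = pdist x y"
proof -
  have "g \<otimes> x \<otimes> inv (g \<otimes> y) = g \<otimes> (x \<otimes> inv y) \<otimes> inv g"
    using assms by (simp add: inv_mult_group m_assoc)
  then show ?thesis
    using assms by (simp add: pdist_def)
qed

lemma pdist_mult_right [simp]:
  assumes "x \<in> carrier G" "y \<in> carrier G" "g \<in> carrier G"
  shows "pdist (x \<otimes> g) (y \<otimes> g) = pdist x y"
proof -
  have "g \<otimes> (inv g \<otimes> inv y) = inv y"
    using assms by (simp add: m_assoc[symmetric])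
  then have "x \<otimes> g \<otimes> inv (y \<otimes> g) = x \<otimes> inv y"
    using assms by (simp add: inv_mult_group m_assoc)
  then show ?thesis
    by (simp add: pdist_def)
qed

lemma pdist_mult_le:
  assumes "x \<in> carrier G" "y \<in> carrier G" "x' \<in> carrier G" "y' \<in> carrier G"
  shows "pdist (x \<otimes> x') (y \<otimes> y') \<le> pdist x y + pdist x' y'"
  using pdist_triangle[of "x \<otimes> x'" "x \<otimes> y'" "y \<otimes> y'"] assms by simp

lemma nu_le_pdist: "\<lbrakk>x \<in> carrier G; y \<in> carrier G\<rbrakk> \<Longrightarrow> nu x \<le> pdist x y + nu y"
  using pdist_triangle[of x y \<one>] by simp

lemma abs_nu_diff_le_pdist: "\<lbrakk>x \<in> carrier G; y \<in> carrier G\<rbrakk> \<Longrightarrow> \<bar>nu x - nu y\<bar> \<le> pdist x y"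
  using nu_le_pdist[of x y] nu_le_pdist[of y x] pdist_sym[of x y] by linarith

lemma pdist_insert:
  assumes "x \<in> carrier G" "y \<in> carrier G" "z \<in> carrier G"
  shows "pdist (x \<otimes> y) (x \<otimes> z \<otimes> y) = nu z"
proof -
  have "pdist (x \<otimes> y) (x \<otimes> z \<otimes> y) = pdist (\<one> \<otimes> y) (z \<otimes> y)"
    using assms by (simp add: m_assoc)
  also have "\<dots> = nu z"
    using assms by (simp only: pdist_mult_right one_closed pdist_one_left)
  finally show ?thesis .
qed

lemma pdist_int_pows_le:
  "x \<in> carrier G \<Longrightarrow> pdist (x [^] (k::int)) (x [^] (l::int)) \<le> \<bar>k - l\<bar> * nu x"
  using nu_int_pow_le[of x "k - l"] by (simp add: pdist_def int_pow_diff)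

lemma pdist_conj_le:
  assumes "x \<in> carrier G" "c \<in> carrier G"
  shows "pdist x (c \<otimes> x \<otimes> inv c) \<le> 2 * nu c"
proof -
  have "pdist x (c \<otimes> x) = nu c"
    using assms pdist_mult_right[of \<one> c x] pdist_sym[of \<one> c] by simp
  moreover have "pdist (c \<otimes> x) (c \<otimes> x \<otimes> inv c) = nu c"
    using assms pdist_mult_left[of \<one> "inv c" "c \<otimes> x"] by simp
  ultimately show ?thesis
    using assms pdist_triangle[of x "c \<otimes> x" "c \<otimes> x \<otimes> inv c"] by simp
qed

text \<open>Replacing \<open>x\<close> by the conjugate that commutes with \<open>y\<close> costs \<open>2 \<nu>(c)\<close> on each side.\<close>
lemma pdist_commutator_le:
  assumes x: "x \<in> carrier G" and y: "y \<in> carrier G" and c: "c \<in> carrier G"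
    and commute: "(c \<otimes> x \<otimes> inv c) \<otimes> y = y \<otimes> (c \<otimes> x \<otimes> inv c)"
  shows "pdist (x \<otimes> y) (y \<otimes> x) \<le> 4 * nu c"
proof -
  let ?x' = "c \<otimes> x \<otimes> inv c"
  have x': "?x' \<in> carrier G"
    using x c by simp
  have "pdist (x \<otimes> y) (y \<otimes> x) \<le> pdist (x \<otimes> y) (?x' \<otimes> y) + pdist (?x' \<otimes> y) (y \<otimes> x)"
    using x y x' by (intro pdist_triangle) auto
  also have "pdist (x \<otimes> y) (?x' \<otimes> y) = pdist x ?x'"
    using x x' y by (rule pdist_mult_right)
  also have "pdist (?x' \<otimes> y) (y \<otimes> x) = pdist ?x' x"
    unfolding commute using x' x y by (rule pdist_mult_left)
  also have "pdist ?x' x = pdist x ?x'"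
    using x' x by (rule pdist_sym)
  finally show ?thesis
    using pdist_conj_le[OF x c] by simp
qed

definition power_commutators_le :: "'a set \<Rightarrow> real \<Rightarrow> bool" where
  "power_commutators_le S B \<longleftrightarrow>
    (\<forall>x\<in>S. \<forall>y\<in>S. \<forall>a b. pdist (x [^] (a::int) \<otimes> y [^] (b::int)) (y [^] b \<otimes> x [^] a) \<le> B)"

end

context group
begin

definition pow_prod :: "('a \<times> int) list \<Rightarrow> 'a" where
  "pow_prod L = foldr (\<lambda>p acc. fst p [^] snd p \<otimes> acc) L \<one>"

lemma pow_prod_Nil [simp]: "pow_prod [] = \<one>"
  by (simp add: pow_prod_def)

lemma pow_prod_Cons [simp]: "pow_prod (p # L) = fst p [^] snd p \<otimes> pow_prod L"
  by (simp add: pow_prod_def)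

lemma pow_prod_closed [simp]: "fst ` set L \<subseteq> carrier G \<Longrightarrow> pow_prod L \<in> carrier G"
  by (induction L) auto

lemma pow_prod_append:
  "\<lbrakk>fst ` set L \<subseteq> carrier G; fst ` set M \<subseteq> carrier G\<rbrakk> \<Longrightarrow> pow_prod (L @ M) = pow_prod L \<otimes> pow_prod M"
  by (induction L) (auto simp: m_assoc)

lemma pow_prod_add_exponents:
  assumes "fst ` set w \<subseteq> carrier G"
  shows "pow_prod (map (\<lambda>p. (fst p, k p + l p)) w) = pow_prod (concat (map (\<lambda>p. [(fst p, k p), (fst p, l p)]) w))"
  using assms
proof (induction w)
  case (Cons p w)
  then have "fst p \<in> carrier G" "pow_prod (concat (map (\<lambda>p. [(fst p, k p), (fst p, l p)]) w)) \<in> carrier G"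
    by (auto simp flip: Cons.IH simp: image_image)
  with Cons show ?case
    by (simp add: int_pow_mult m_assoc)
qed simp

end

context pseudo_normed_group
begin

lemma pdist_pow_prod_move_front:
  assumes S: "S \<subseteq> carrier G"
    and B: "power_commutators_le S B"
    and u: "fst ` set u \<subseteq> S" and p: "fst p \<in> S" and v: "fst ` set v \<subseteq> carrier G"
  shows "pdist (pow_prod (u @ p # v)) (pow_prod (p # u @ v)) \<le> B * length u"
  using u
proof (induction u)
  case Nil
  then show ?case
    using S p v by auto
next
  case (Cons q u)
  let ?x = "fst p [^] snd p" and ?y = "fst q [^] snd q"
  have "fst ` set u \<subseteq> carrier G" "fst q \<in> carrier G" "fst p \<in> carrier G"
    using Cons.prems S p by auto
  then have carrier: "?x \<in> carrier G" "?y \<in> carrier G" "pow_prod (u @ p # v) \<in> carrier G"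
    "pow_prod (u @ v) \<in> carrier G"
    using v by (auto simp: image_Un)
  have "pdist (pow_prod (u @ p # v)) (pow_prod (p # u @ v)) \<le> B * length u"
    using Cons by simp
  then have front: "pdist (?y \<otimes> pow_prod (u @ p # v)) (?y \<otimes> (?x \<otimes> pow_prod (u @ v))) \<le> B * length u"
    using carrier by simp
  have "pdist (?y \<otimes> ?x) (?x \<otimes> ?y) \<le> B"
    using B Cons.prems p unfolding power_commutators_le_def by auto
  then have swap: "pdist (?y \<otimes> (?x \<otimes> pow_prod (u @ v))) (?x \<otimes> ?y \<otimes> pow_prod (u @ v)) \<le> B"
    using carrier pdist_mult_right[of "?y \<otimes> ?x" "?x \<otimes> ?y" "pow_prod (u @ v)"] by (simp add: m_assoc)
  have "pdist (pow_prod ((q # u) @ p # v)) (pow_prod (p # (q # u) @ v))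
      \<le> pdist (?y \<otimes> pow_prod (u @ p # v)) (?y \<otimes> (?x \<otimes> pow_prod (u @ v)))
        + pdist (?y \<otimes> (?x \<otimes> pow_prod (u @ v))) (?x \<otimes> ?y \<otimes> pow_prod (u @ v))"
    using carrier pdist_triangle[of "?y \<otimes> pow_prod (u @ p # v)" "?y \<otimes> (?x \<otimes> pow_prod (u @ v))"
        "?x \<otimes> ?y \<otimes> pow_prod (u @ v)"] by (simp add: m_assoc)
  with front swap show ?case
    by (simp add: algebra_simps)
qed

text \<open>Each letter of \<open>L\<close> is moved to its place in \<open>L'\<close> by at most \<open>length L\<close> swaps.\<close>
lemma pdist_pow_prod_perm:
  assumes S: "S \<subseteq> carrier G"
    and B: "power_commutators_le S B"
    and B_nonneg: "0 \<le> B"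
    and "fst ` set L \<subseteq> S" "mset L = mset L'"
  shows "pdist (pow_prod L) (pow_prod L') \<le> B * (length L)\<^sup>2"
  using assms(4,5)
proof (induction L arbitrary: L')
  case Nil
  then show ?case
    by simp
next
  case (Cons p L)
  then have "p \<in> set L'"
    by (metis list.set_intros(1) set_mset_mset)
  then obtain u v where L': "L' = u @ p # v"
    by (meson split_list)
  have mset_L: "mset L = mset (u @ v)"
    using Cons.prems(2) unfolding L' by simp
  have "set L' = set (p # L)"
    using Cons.prems(2) by (metis set_mset_mset)
  then have "fst ` set L' \<subseteq> S"
    using Cons.prems(1) by simp
  then have in_S: "fst ` set u \<subseteq> S" "fst ` set v \<subseteq> S" "fst p \<in> S" "fst ` set L \<subseteq> S"
    using Cons.prems(1) unfolding L' by auto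
  have length_u: "length u \<le> length L"
    using arg_cong[OF mset_L, of size] by simp
  have "fst ` set u \<subseteq> carrier G" "fst ` set v \<subseteq> carrier G" "fst p \<in> carrier G"
    "fst ` set L \<subseteq> carrier G"
    using in_S S by auto
  then have carrier: "fst p [^] snd p \<in> carrier G" "pow_prod L \<in> carrier G" "pow_prod (u @ v) \<in> carrier G"
    "pow_prod (p # u @ v) \<in> carrier G" "pow_prod L' \<in> carrier G"
    unfolding L' by (auto simp: image_Un)
  have "pdist (pow_prod (p # L)) (pow_prod (p # u @ v)) = pdist (pow_prod L) (pow_prod (u @ v))"
    using carrier by simp
  also have "\<dots> \<le> B * (length L)\<^sup>2"
    using Cons.IH[OF in_S(4) mset_L] .
  finally have tail: "pdist (pow_prod (p # L)) (pow_prod (p # u @ v)) \<le> B * (length L)\<^sup>2" .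
  have "pdist (pow_prod (p # u @ v)) (pow_prod L') \<le> B * length u"
    using pdist_sym carrier pdist_pow_prod_move_front[OF S B in_S(1,3)] in_S(2) S
    unfolding L' by (metis subset_trans)
  also have "\<dots> \<le> B * length L"
    using length_u B_nonneg by (simp add: mult_left_mono)
  finally have head: "pdist (pow_prod (p # u @ v)) (pow_prod L') \<le> B * length L" .
  have "B * (length L)\<^sup>2 + B * length L \<le> B * (length (p # L))\<^sup>2"
    using B_nonneg by (simp add: power2_eq_square algebra_simps)
  then show ?case
    using pdist_triangle[of "pow_prod (p # L)" "pow_prod (p # u @ v)" "pow_prod L'"] carrier tail head
    by simp
qed

lemma pdist_pow_prod_exponents_le:
  assumes "fst ` set w \<subseteq> carrier G" "\<And>p. p \<in> set w \<Longrightarrow> \<bar>k p - l p\<bar> \<le> K"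
  shows "pdist (pow_prod (map (\<lambda>p. (fst p, k p)) w)) (pow_prod (map (\<lambda>p. (fst p, l p)) w))
    \<le> K * (\<Sum>p\<leftarrow>w. nu (fst p))"
  using assms
proof (induction w)
  case Nil
  then show ?case
    by simp
next
  case (Cons p w)
  let ?g = "fst p"
  have g: "?g \<in> carrier G"
    using Cons.prems by auto
  have "\<bar>real_of_int (k p) - real_of_int (l p)\<bar> \<le> K"
    using Cons.prems(2)[of p] by simp
  then have "pdist (?g [^] k p) (?g [^] l p) \<le> K * nu ?g"
    using pdist_int_pows_le[OF g, of "k p" "l p"] nu_nonneg[OF g]
    by (meson mult_right_mono order_trans)
  moreover have "pdist (pow_prod (map (\<lambda>p. (fst p, k p)) w)) (pow_prod (map (\<lambda>p. (fst p, l p)) w))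
      \<le> K * (\<Sum>p\<leftarrow>w. nu (fst p))"
    using Cons by simp
  moreover have "pow_prod (map (\<lambda>p. (fst p, k p)) w) \<in> carrier G"
    "pow_prod (map (\<lambda>p. (fst p, l p)) w) \<in> carrier G"
    using Cons.prems(1) by (auto simp: image_image)
  ultimately show ?case
    using pdist_mult_le[of "?g [^] k p" "?g [^] l p"] g by (simp add: distrib_left) (meson add_mono order_trans)
qed

end

context group
begin

lemma words_iff: "w \<in> words G \<longleftrightarrow> fst ` set w \<subseteq> carrier G"
  by (simp add: words_def)

lemma words_Nil [simp]: "[] \<in> words G"
  by (simp add: words_def)

lemma words_Cons [simp]: "p # w \<in> words G \<longleftrightarrow> fst p \<in> carrier G \<and> w \<in> words G"
  by (simp add: words_def)

lemma words_append [simp]: "u @ w \<in> words G \<longleftrightarrow> u \<in> words G \<and> w \<in> words G"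
  by (auto simp: words_def)

lemma wscale_map: "wscale c w = map (\<lambda>p. (fst p, c * snd p)) w"
  by (simp add: wscale_def case_prod_beta')

lemma wscale_words [simp]: "wscale c w \<in> words G \<longleftrightarrow> w \<in> words G"
  by (simp add: words_def wscale_map image_image)

lemma wscale_append: "wscale c (u @ w) = wscale c u @ wscale c w"
  by (simp add: wscale_map)

lemma wscale_wscale [simp]: "wscale a (wscale b w) = wscale (a * b) w"
  by (simp add: wscale_map mult.assoc)

lemma wscale_one [simp]: "wscale 1 w = w"
  by (simp add: wscale_map)

lemma wbar_eq_rev_wscale: "wbar w = rev (wscale (-1) w)"
  by (simp add: wscale_map wbar_def case_prod_beta')

lemma wbar_Nil [simp]: "wbar [] = []"
  by (simp add: wbar_def)

lemma wbar_Cons: "wbar (p # w) = wbar w @ [(fst p, - snd p)]"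
  by (cases p) (simp add: wbar_def)

lemma wbar_append: "wbar (u @ w) = wbar w @ wbar u"
  by (simp add: wbar_def)

lemma wbar_wbar [simp]: "wbar (wbar w) = w"
  by (induction w) (auto simp: wbar_def)

lemma wbar_words [simp]: "wbar w \<in> words G \<longleftrightarrow> w \<in> words G"
  by (simp add: wbar_def words_def case_prod_beta' image_image)

lemma words_rev [simp]: "rev w \<in> words G \<longleftrightarrow> w \<in> words G"
  by (simp add: words_def)

lemma wbar_wscale: "wbar (wscale c w) = wscale c (wbar w)"
  by (simp add: wscale_map wbar_def case_prod_beta' rev_map)

lemma word_eval_eq_pow_prod: "word_eval G w n = pow_prod (map (\<lambda>p. (fst p, \<lfloor>snd p * real n\<rfloor>)) w)"
  unfolding word_eval_def pow_prod_def by (induction w) auto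

lemma word_eval_Nil [simp]: "word_eval G [] n = \<one>"
  by (simp add: word_eval_def)

lemma word_eval_Cons [simp]: "word_eval G (p # w) n = fst p [^] \<lfloor>snd p * real n\<rfloor> \<otimes> word_eval G w n"
  by (simp add: word_eval_eq_pow_prod)

lemma word_eval_closed [simp]: "w \<in> words G \<Longrightarrow> word_eval G w n \<in> carrier G"
  by (induction w) auto

lemma word_eval_append:
  "\<lbrakk>u \<in> words G; w \<in> words G\<rbrakk> \<Longrightarrow> word_eval G (u @ w) n = word_eval G u n \<otimes> word_eval G w n"
  by (induction u) (auto simp: m_assoc)

lemma word_eval_0: "w \<in> words G \<Longrightarrow> word_eval G w 0 = \<one>"
  by (induction w) auto

end

section \<open>Growth rates of real sequences\<close>

lemma subadditive_iterate:
  fixes a :: "nat \<Rightarrow> real"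
  assumes "\<And>m n. a (m + n) \<le> a m + a n"
  shows "a (q * k + j) \<le> real q * a k + a j"
proof (induction q)
  case (Suc q)
  have "a (Suc q * k + j) = a (k + (q * k + j))"
    by (simp add: algebra_simps)
  also have "\<dots> \<le> a k + a (q * k + j)"
    by (rule assms)
  finally show ?case
    using Suc by (simp add: algebra_simps)
qed simp

lemma subadditive_quotient_le:
  fixes a :: "nat \<Rightarrow> real"
  assumes nonneg: "\<And>n. 0 \<le> a n" and sub: "\<And>m n. a (m + n) \<le> a m + a n"
    and "0 < k" "0 < n" and M: "\<And>j. j < k \<Longrightarrow> a j \<le> M"
  shows "a n / n \<le> a k / k + M / n"
proof -
  have "a n \<le> real (n div k) * a k + a (n mod k)"
    using subadditive_iterate[OF sub, of "n div k" k "n mod k"] by simp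
  also have "real (n div k) * a k = real (n div k * k) * (a k / k)"
    using \<open>0 < k\<close> by simp
  also have "\<dots> \<le> real n * (a k / k)"
    using nonneg by (intro mult_right_mono)
      (simp_all del: of_nat_mult add: of_nat_mult[symmetric] div_times_less_eq_dividend)
  also have "a (n mod k) \<le> M"
    using M \<open>0 < k\<close> by simp
  finally show ?thesis
    using \<open>0 < n\<close> by (simp add: field_simps)
qed

lemma subadditive_quotient_convergent:
  fixes a :: "nat \<Rightarrow> real"
  assumes nonneg: "\<And>n. 0 \<le> a n" and sub: "\<And>m n. a (m + n) \<le> a m + a n"
  shows "convergent (\<lambda>n. a n / n)"
proof -
  define L where "L = (INF n\<in>{1..}. a n / n)"
  have bdd: "bdd_below ((\<lambda>n. a n / n) ` {1..})"
    using nonneg by (intro bdd_belowI[of _ 0]) auto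
  have "(\<lambda>n. a n / n) \<longlonglongrightarrow> L"
  proof (rule LIMSEQ_I)
    fix r :: real
    assume "0 < r"
    then obtain k where k: "1 \<le> k" "a k / k < L + r / 2"
      using cInf_less_iff[OF _ bdd, of "L + r / 2"] unfolding L_def by auto
    define M where "M = (\<Sum>j<k. a j)"
    have M: "a j \<le> M" if "j < k" for j
      unfolding M_def using that nonneg by (intro member_le_sum) auto
    obtain N :: nat where N: "2 * M / r < N"
      using reals_Archimedean2 by blast
    have "norm (a n / n - L) < r" if "max N 1 \<le> n" for n
    proof -
      have n: "0 < n" "2 * M / r < n"
        using that N by auto
      then have "M / n < r / 2"
        using \<open>0 < r\<close> by (simp add: field_simps)
      moreover have "a n / n \<le> a k / k + M / n"
        using k n by (intro subadditive_quotient_le[OF nonneg sub _ _ M]) auto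
      moreover have "L \<le> a n / n"
        unfolding L_def using n bdd by (intro cINF_lower) auto
      ultimately show ?thesis
        using k by (simp only: real_norm_def abs_less_iff) linarith
    qed
    then show "\<exists>N. \<forall>n\<ge>N. norm (a n / n - L) < r"
      by blast
  qed
  then show ?thesis
    by (rule convergentI)
qed

lemma almost_subadditive_quotient_convergent:
  fixes a :: "nat \<Rightarrow> real"
  assumes "\<And>n. 0 \<le> a n" "\<And>m n. a (m + n) \<le> a m + a n + C" "0 \<le> C"
  shows "convergent (\<lambda>n. a n / n)"
proof -
  have "convergent (\<lambda>n. (a n + C) / n)"
    using assms by (intro subadditive_quotient_convergent) (auto simp: algebra_simps)
  then have "convergent (\<lambda>n. (a n + C) / n - C / n)"
    using lim_const_over_n[of C] by (intro convergent_diff) (auto simp: convergent_def)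
  then show ?thesis
    by (simp add: add_divide_distrib)
qed

lemma floor_mult_over_n_tendsto:
  assumes "0 \<le> c"
  shows "(\<lambda>n. real (nat \<lfloor>c * real n\<rfloor>) / real n) \<longlonglongrightarrow> c"
proof (rule tendsto_sandwich[of "\<lambda>n. c - 1 / real n" _ _ "\<lambda>n. c"])
  have bounds: "c * real n - 1 < real (nat \<lfloor>c * real n\<rfloor>)" "real (nat \<lfloor>c * real n\<rfloor>) \<le> c * real n"
    for n
    using assms by (simp_all add: of_nat_nat)
  show "\<forall>\<^sub>F n in sequentially. c - 1 / real n \<le> real (nat \<lfloor>c * real n\<rfloor>) / real n"
  proof (rule eventually_sequentiallyI[of 1])
    fix n :: nat
    assume "1 \<le> n"
    then have "c - 1 / real n = (c * real n - 1) / real n"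
      by (simp add: field_simps)
    also have "\<dots> \<le> real (nat \<lfloor>c * real n\<rfloor>) / real n"
      using bounds(1)[of n] by (intro divide_right_mono) auto
    finally show "c - 1 / real n \<le> real (nat \<lfloor>c * real n\<rfloor>) / real n" .
  qed
  show "\<forall>\<^sub>F n in sequentially. real (nat \<lfloor>c * real n\<rfloor>) / real n \<le> c"
    using bounds(2) by (intro eventually_sequentiallyI[of 1]) (simp add: field_simps)
  show "(\<lambda>n. c - 1 / real n) \<longlonglongrightarrow> c"
    using tendsto_diff[OF tendsto_const lim_const_over_n, of c 1] by simp
qed simp

lemma tendsto_over_n_rescale:
  fixes a b :: "nat \<Rightarrow> real"
  assumes lim: "(\<lambda>k. a k / real k) \<longlonglongrightarrow> L" and "a 0 = 0" and c: "0 < c"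
    and close: "\<And>n. \<bar>b n - a (nat \<lfloor>c * real n\<rfloor>)\<bar> \<le> D"
  shows "(\<lambda>n. b n / real n) \<longlonglongrightarrow> c * L"
proof -
  define m where "m n = nat \<lfloor>c * real n\<rfloor>" for n
  have "filterlim m sequentially sequentially"
    unfolding m_def using c
    by (intro filterlim_compose[OF filterlim_nat_sequentially]
        filterlim_compose[OF filterlim_floor_sequentially]
        filterlim_tendsto_pos_mult_at_top[OF tendsto_const _ filterlim_real_sequentially])
  moreover have "(\<lambda>n. real (m n) / real n) \<longlonglongrightarrow> c"
    unfolding m_def using floor_mult_over_n_tendsto c by simp
  ultimately have "(\<lambda>n. a (m n) / real (m n) * (real (m n) / real n)) \<longlonglongrightarrow> L * c"
    using filterlim_compose[OF lim] by (intro tendsto_mult)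
  moreover have "a (m n) / real (m n) * (real (m n) / real n) = a (m n) / real n" for n
    using \<open>a 0 = 0\<close> by (cases "m n = 0") auto
  ultimately have main: "(\<lambda>n. a (m n) / real n) \<longlonglongrightarrow> c * L"
    by (simp add: mult.commute)
  have "(\<lambda>n. (b n - a (m n)) / real n) \<longlonglongrightarrow> 0"
  proof (rule tendsto_sandwich[of "\<lambda>n. - D / real n" _ _ "\<lambda>n. D / real n"])
    have "- D / real n \<le> (b n - a (m n)) / real n" "(b n - a (m n)) / real n \<le> D / real n" for n
      using close[of n] unfolding m_def by (intro divide_right_mono; simp add: abs_le_iff)+
    then show "\<forall>\<^sub>F n in sequentially. - D / real n \<le> (b n - a (m n)) / real n"
      "\<forall>\<^sub>F n in sequentially. (b n - a (m n)) / real n \<le> D / real n"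
      by simp_all
  qed (use lim_const_over_n[of "- D"] lim_const_over_n[of D] in simp_all)
  from tendsto_add[OF this main] show ?thesis
    by (simp add: diff_divide_distrib)
qed

lemma floor_add_floor_neg: "\<bar>\<lfloor>x\<rfloor> + \<lfloor>- x\<rfloor>\<bar> \<le> 1"
  by (simp add: floor_minus ceiling_altdef)

lemma floor_sum_three:
  fixes x y z :: real
  assumes "x + y + z = 0"
  shows "\<bar>\<lfloor>x\<rfloor> + \<lfloor>y\<rfloor> + \<lfloor>z\<rfloor>\<bar> \<le> 2"
proof -
  have "real_of_int (\<lfloor>x\<rfloor> + \<lfloor>y\<rfloor> + \<lfloor>z\<rfloor>) \<le> 0"
    using assms of_int_floor_le[of x] of_int_floor_le[of y] of_int_floor_le[of z]
    by (simp only: of_int_add)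
  moreover have "-3 < real_of_int (\<lfloor>x\<rfloor> + \<lfloor>y\<rfloor> + \<lfloor>z\<rfloor>)"
    using assms floor_correct[of x, THEN conjunct2] floor_correct[of y, THEN conjunct2]
      floor_correct[of z, THEN conjunct2] by (simp only: of_int_add)
  ultimately show ?thesis
    by linarith
qed

lemma floor_add_le_one: "\<bar>\<lfloor>x + y\<rfloor> - (\<lfloor>x\<rfloor> + \<lfloor>y\<rfloor>)\<bar> \<le> 1"
  by (simp add: floor_add)

lemma floor_diff_le: "\<bar>\<lfloor>x\<rfloor> - \<lfloor>y\<rfloor>\<bar> \<le> \<bar>x - y\<bar> + (1::real)"
  using floor_correct[of x] floor_correct[of y] by (simp add: abs_le_iff) linarith

context pseudo_normed_group
begin

text \<open>\<open>w(m+n)\<close> is \<open>w(m) w(n)\<close> up to one rounding error per letter and a reordering of \<open>2 |w|\<close> powers.\<close>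
lemma nu_word_eval_add_le:
  assumes w: "w \<in> words G" and "0 \<le> B"
    and B: "power_commutators_le (fst ` set w) B"
  shows "nu (word_eval G w (m + n))
    \<le> nu (word_eval G w m) + nu (word_eval G w n) + ((\<Sum>p\<leftarrow>w. nu (fst p)) + B * (2 * length w)\<^sup>2)"
proof -
  let ?k = "\<lambda>p. \<lfloor>snd p * real m\<rfloor>" and ?l = "\<lambda>p. \<lfloor>snd p * real n\<rfloor>"
  let ?E = "concat (map (\<lambda>p. [(fst p, ?k p), (fst p, ?l p)]) w)"
  let ?A = "map (\<lambda>p. (fst p, ?k p)) w" and ?B = "map (\<lambda>p. (fst p, ?l p)) w"
  have wc: "fst ` set w \<subseteq> carrier G"
    using w by (simp add: words_iff)
  have "pdist (word_eval G w (m + n)) (pow_prod (map (\<lambda>p. (fst p, ?k p + ?l p)) w))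
      \<le> 1 * (\<Sum>p\<leftarrow>w. nu (fst p))"
    unfolding word_eval_eq_pow_prod
  proof (rule pdist_pow_prod_exponents_le[OF wc])
    fix p :: "'a \<times> real"
    show "\<bar>\<lfloor>snd p * real (m + n)\<rfloor> - (?k p + ?l p)\<bar> \<le> (1::real)"
      using floor_add_le_one[of "snd p * real m" "snd p * real n"] by (simp add: distrib_left)
  qed
  then have rounding: "pdist (word_eval G w (m + n)) (pow_prod ?E) \<le> (\<Sum>p\<leftarrow>w. nu (fst p))"
    using pow_prod_add_exponents[OF wc] by simp
  have "mset ?E = mset (?A @ ?B)"
    by (induction w) auto
  moreover have "length ?E = 2 * length w"
    by (induction w) auto
  ultimately have "pdist (pow_prod ?E) (pow_prod (?A @ ?B)) \<le> B * (2 * length w)\<^sup>2"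
    using pdist_pow_prod_perm[where S = "fst ` set w" and L = ?E and L' = "?A @ ?B", OF wc B \<open>0 \<le> B\<close>]
    by force
  moreover have "pow_prod (?A @ ?B) = word_eval G w m \<otimes> word_eval G w n"
    unfolding word_eval_eq_pow_prod using wc by (intro pow_prod_append) (auto simp: image_image)
  ultimately have reordering:
    "pdist (pow_prod ?E) (word_eval G w m \<otimes> word_eval G w n) \<le> B * (2 * length w)\<^sup>2"
    by simp
  have "pow_prod ?E \<in> carrier G"
    unfolding pow_prod_add_exponents[OF wc, symmetric] using wc by (simp add: image_image)
  then show ?thesis
    using rounding reordering w nu_mult_le[of "word_eval G w m" "word_eval G w n"]
      nu_le_pdist[of "word_eval G w (m + n)" "pow_prod ?E"]
      nu_le_pdist[of "pow_prod ?E" "word_eval G w m \<otimes> word_eval G w n"]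
    by simp
qed

lemma sum_list_nu_nonneg: "fst ` set w \<subseteq> carrier G \<Longrightarrow> 0 \<le> (\<Sum>p\<leftarrow>w. nu (fst p))"
  by (induction w) (auto intro: add_nonneg_nonneg nu_nonneg)

lemma nu_int_pow_le_mult:
  assumes "x \<in> carrier G" "\<bar>k\<bar> \<le> K"
  shows "nu (x [^] (k::int)) \<le> K * nu x"
proof -
  have "nu (x [^] k) \<le> real_of_int \<bar>k\<bar> * nu x"
    using nu_int_pow_le[OF assms(1), of k] by simp
  also have "\<dots> \<le> K * nu x"
    using assms nu_nonneg by (intro mult_right_mono) auto
  finally show ?thesis .
qed

lemma nu_word_eval_cancel_le:
  "w \<in> words G \<Longrightarrow> nu (word_eval G (w @ wbar w) n) \<le> (\<Sum>p\<leftarrow>w. nu (fst p))"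
proof (induction w)
  case (Cons p w)
  define g a b Y where "g = fst p" and "a = \<lfloor>snd p * real n\<rfloor>" and "b = \<lfloor>- snd p * real n\<rfloor>"
    and "Y = word_eval G (w @ wbar w) n"
  have carrier: "g \<in> carrier G" "w \<in> words G" "Y \<in> carrier G"
    using Cons.prems by (auto simp: g_def Y_def)
  have "(p # w) @ wbar (p # w) = p # (w @ wbar w) @ [(fst p, - snd p)]"
    by (simp add: wbar_Cons)
  then have "word_eval G ((p # w) @ wbar (p # w)) n = g [^] a \<otimes> Y \<otimes> g [^] b"
    using Cons.prems carrier by (simp add: word_eval_append m_assoc g_def a_def b_def Y_def)
  moreover have "pdist (g [^] a \<otimes> g [^] b) (g [^] a \<otimes> Y \<otimes> g [^] b) = nu Y"
    using carrier by (intro pdist_insert) auto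
  then have "nu (g [^] a \<otimes> Y \<otimes> g [^] b) \<le> nu Y + nu (g [^] (a + b))"
    using carrier nu_le_pdist[of "g [^] a \<otimes> Y \<otimes> g [^] b" "g [^] a \<otimes> g [^] b"]
      pdist_sym[of "g [^] a \<otimes> g [^] b" "g [^] a \<otimes> Y \<otimes> g [^] b"]
    by (simp add: int_pow_mult)
  moreover have "nu (g [^] (a + b)) \<le> 1 * nu g"
    using carrier floor_add_floor_neg[of "snd p * real n"] by (intro nu_int_pow_le_mult) (simp_all add: a_def b_def)
  ultimately show ?case
    using Cons carrier by (simp add: g_def Y_def)
qed simp

lemma nu_word_eval_zero_sum_triples:
  fixes r s t :: "'a \<times> 'c \<Rightarrow> real"
  assumes "fst ` set w \<subseteq> carrier G" "\<And>p. p \<in> set w \<Longrightarrow> r p + s p + t p = 0"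
  shows "nu (word_eval G (concat (map (\<lambda>p. [(fst p, r p), (fst p, s p), (fst p, t p)]) w)) n)
    \<le> 2 * (\<Sum>p\<leftarrow>w. nu (fst p))"
  using assms
proof (induction w)
  case (Cons p w)
  define g e Y where "g = fst p" and "e = \<lfloor>r p * real n\<rfloor> + \<lfloor>s p * real n\<rfloor> + \<lfloor>t p * real n\<rfloor>"
    and "Y = word_eval G (concat (map (\<lambda>p. [(fst p, r p), (fst p, s p), (fst p, t p)]) w)) n"
  have "concat (map (\<lambda>p. [(fst p, r p), (fst p, s p), (fst p, t p)]) w) \<in> words G"
    using Cons.prems(1) by (induction w) auto
  then have carrier: "g \<in> carrier G" "Y \<in> carrier G"
    using Cons.prems(1) by (auto simp: g_def Y_def)
  have "\<bar>e\<bar> \<le> 2"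
    unfolding e_def using Cons.prems(2)[of p] by (intro floor_sum_three) (simp flip: distrib_right)
  then have "nu (g [^] e) \<le> 2 * nu g"
    using carrier by (intro nu_int_pow_le_mult) auto
  moreover have "word_eval G (concat (map (\<lambda>p. [(fst p, r p), (fst p, s p), (fst p, t p)]) (p # w))) n
      = g [^] e \<otimes> Y"
    using carrier by (simp add: int_pow_mult m_assoc g_def e_def Y_def)
  moreover have "nu (g [^] e \<otimes> Y) \<le> nu (g [^] e) + nu Y"
    using carrier by (intro nu_mult_le) auto
  ultimately show ?case
    using Cons carrier by (simp add: g_def Y_def)
qed simp

end

section \<open>The norm of a word under property FM\<close>

locale FM_pseudo_normed_group = pseudo_normed_group +
  assumes FM: "FM G"
begin

lemma power_commutators_bounded:
  assumes "f \<in> carrier G" "g \<in> carrier G"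
  shows "\<exists>B. \<forall>a b. pdist (f [^] (a::int) \<otimes> g [^] (b::int)) (g [^] b \<otimes> f [^] a) \<le> B"
proof -
  obtain c where c: "c \<in> carrier G" "(c \<otimes> f \<otimes> inv c) \<otimes> g = g \<otimes> (c \<otimes> f \<otimes> inv c)"
    using FM_conjugate_commute[OF FM assms] by blast
  have "pdist (f [^] a \<otimes> g [^] b) (g [^] b \<otimes> f [^] a) \<le> 4 * nu c" for a b :: int
  proof (rule pdist_commutator_le)
    show "(c \<otimes> f [^] a \<otimes> inv c) \<otimes> g [^] b = g [^] b \<otimes> (c \<otimes> f [^] a \<otimes> inv c)"
      using assms c by (simp add: conj_int_pow commute_int_pows)
  qed (use assms c in auto)
  then show ?thesis
    by blast
qed

lemma power_commutators_bounded_on: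
  assumes "finite S" "S \<subseteq> carrier G"
  obtains B where "0 \<le> B" "power_commutators_le S B"
proof -
  have "\<forall>q\<in>S \<times> S. \<exists>C. \<forall>a b. pdist (fst q [^] (a::int) \<otimes> snd q [^] (b::int))
      (snd q [^] b \<otimes> fst q [^] a) \<le> C"
    using assms(2) by (auto intro!: power_commutators_bounded)
  then obtain C where C: "\<And>q a b. q \<in> S \<times> S \<Longrightarrow>
      pdist (fst q [^] (a::int) \<otimes> snd q [^] (b::int)) (snd q [^] b \<otimes> fst q [^] a) \<le> C q"
    by metis
  define B where "B = (\<Sum>q\<in>S \<times> S. \<bar>C q\<bar>)"
  have "\<bar>C q\<bar> \<le> B" if "q \<in> S \<times> S" for q
    unfolding B_def using that assms(1) by (intro member_le_sum) auto
  then have "pdist (x [^] a \<otimes> y [^] b) (y [^] b \<otimes> x [^] a) \<le> B" if "x \<in> S" "y \<in> S" for x y and a b :: int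
    using C[of "(x, y)" a b] that by fastforce
  moreover have "0 \<le> B"
    unfolding B_def by (simp add: sum_nonneg)
  ultimately show ?thesis
    using that unfolding power_commutators_le_def by blast
qed

lemma convergent_word_seq:
  assumes w: "w \<in> words G"
  shows "convergent (word_seq G nu w)"
proof -
  have "finite (fst ` set w)" "fst ` set w \<subseteq> carrier G"
    using w by (simp_all add: words_iff)
  then obtain B where "0 \<le> B" "power_commutators_le (fst ` set w) B"
    by (rule power_commutators_bounded_on)
  then have "convergent (\<lambda>n. nu (word_eval G w n) / n)"
    using w nu_nonneg nu_word_eval_add_le
    by (intro almost_subadditive_quotient_convergent[where C = "(\<Sum>p\<leftarrow>w. nu (fst p)) + B * (2 * length w)\<^sup>2"])
      (auto intro!: add_nonneg_nonneg sum_list_nu_nonneg simp: words_iff)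
  then show ?thesis
    by (simp add: word_seq_def[abs_def])
qed

lemma wnorm_Nil [simp]: "wnorm G nu [] = 0"
  by (simp add: wnorm_def)

lemma word_seq_tendsto_wnorm:
  assumes "w \<in> words G"
  shows "word_seq G nu w \<longlonglongrightarrow> wnorm G nu w"
proof (cases "w = []")
  case True
  then show ?thesis
    by (simp add: word_seq_def[abs_def])
next
  case False
  then show ?thesis
    using convergent_word_seq[OF assms] by (simp add: wnorm_def convergent_LIMSEQ_iff)
qed

lemma wnorm_nonneg: "w \<in> words G \<Longrightarrow> 0 \<le> wnorm G nu w"
  by (rule LIMSEQ_le_const[OF word_seq_tendsto_wnorm]) (auto simp: word_seq_def nu_nonneg)

lemma wnorm_le_of_bounded_defect:
  assumes u: "u \<in> words G" and v: "v \<in> words G" and w: "w \<in> words G"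
    and le: "\<And>n. nu (word_eval G u n) \<le> nu (word_eval G v n) + nu (word_eval G w n) + C"
  shows "wnorm G nu u \<le> wnorm G nu v + wnorm G nu w"
proof -
  have "(\<lambda>n. word_seq G nu v n + word_seq G nu w n + C / n) \<longlonglongrightarrow> wnorm G nu v + wnorm G nu w + 0"
    by (intro tendsto_add word_seq_tendsto_wnorm v w lim_const_over_n)
  moreover have "word_seq G nu u n \<le> word_seq G nu v n + word_seq G nu w n + C / n" for n
    using divide_right_mono[OF le[of n], of "real n"] by (simp add: word_seq_def add_divide_distrib)
  ultimately show ?thesis
    using LIMSEQ_le[OF word_seq_tendsto_wnorm[OF u]] by simp
qed

lemma wnorm_le_if_pdist_bounded:
  assumes u: "u \<in> words G" and v: "v \<in> words G"
    and bounded: "\<And>n. pdist (word_eval G u n) (word_eval G v n) \<le> C"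
  shows "wnorm G nu u \<le> wnorm G nu v"
proof -
  have "wnorm G nu u \<le> wnorm G nu v + wnorm G nu []"
  proof (rule wnorm_le_of_bounded_defect[OF u v words_Nil])
    fix n
    show "nu (word_eval G u n) \<le> nu (word_eval G v n) + nu (word_eval G [] n) + C"
      using nu_le_pdist[of "word_eval G u n" "word_eval G v n"] bounded[of n] u v by simp
  qed
  then show ?thesis
    by simp
qed

lemma wnorm_eq_if_pdist_bounded:
  assumes u: "u \<in> words G" and v: "v \<in> words G"
    and bounded: "\<And>n. pdist (word_eval G u n) (word_eval G v n) \<le> C"
  shows "wnorm G nu u = wnorm G nu v"
proof -
  have "pdist (word_eval G v n) (word_eval G u n) \<le> C" for n
    using bounded[of n] pdist_sym[of "word_eval G u n" "word_eval G v n"] u v by simp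
  then have "wnorm G nu v \<le> wnorm G nu u"
    by (rule wnorm_le_if_pdist_bounded[OF v u])
  with wnorm_le_if_pdist_bounded[OF u v bounded] show ?thesis
    by simp
qed

lemma wnorm_append_le:
  "\<lbrakk>u \<in> words G; w \<in> words G\<rbrakk> \<Longrightarrow> wnorm G nu (u @ w) \<le> wnorm G nu u + wnorm G nu w"
  by (rule wnorm_le_of_bounded_defect[where C = 0]) (simp_all add: word_eval_append nu_mult_le)

lemma wnorm_mset_eq:
  assumes u: "u \<in> words G" and v: "v \<in> words G" and "mset u = mset v"
  shows "wnorm G nu u = wnorm G nu v"
proof -
  have S: "finite (fst ` set u)" "fst ` set u \<subseteq> carrier G"
    using u by (simp_all add: words_iff)
  obtain B where B: "0 \<le> B" "power_commutators_le (fst ` set u) B"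
    using power_commutators_bounded_on[OF S] by blast
  have "pdist (word_eval G u n) (word_eval G v n) \<le> B * (length u)\<^sup>2" for n
  proof -
    let ?F = "\<lambda>p. (fst p, \<lfloor>snd p * real n\<rfloor>)"
    have "pdist (pow_prod (map ?F u)) (pow_prod (map ?F v)) \<le> B * (length (map ?F u))\<^sup>2"
      using \<open>mset u = mset v\<close> by (intro pdist_pow_prod_perm[OF S(2) B(2,1)]) (auto simp: image_image)
    then show ?thesis
      by (simp add: word_eval_eq_pow_prod)
  qed
  then show ?thesis
    by (rule wnorm_eq_if_pdist_bounded[OF u v])
qed

lemma wnorm_insert_bounded:
  assumes u: "u \<in> words G" and z: "z \<in> words G" and v: "v \<in> words G"
    and bounded: "\<And>n. nu (word_eval G z n) \<le> C"
  shows "wnorm G nu (u @ z @ v) = wnorm G nu (u @ v)"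
proof (rule wnorm_eq_if_pdist_bounded)
  fix n
  let ?U = "word_eval G u n" and ?Z = "word_eval G z n" and ?V = "word_eval G v n"
  have "pdist (?U \<otimes> ?V) (?U \<otimes> ?Z \<otimes> ?V) = nu ?Z"
    using u z v by (intro pdist_insert) auto
  then have "pdist (?U \<otimes> ?Z \<otimes> ?V) (?U \<otimes> ?V) = nu ?Z"
    using u z v pdist_sym[of "?U \<otimes> ?V" "?U \<otimes> ?Z \<otimes> ?V"] by simp
  then show "pdist (word_eval G (u @ z @ v) n) (word_eval G (u @ v) n) \<le> C"
    using u z v bounded by (simp add: word_eval_append m_assoc)
qed (use u z v in simp_all)

lemma wnorm_bounded_eq_0:
  "\<lbrakk>z \<in> words G; \<And>n. nu (word_eval G z n) \<le> C\<rbrakk> \<Longrightarrow> wnorm G nu z = 0"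
  using wnorm_insert_bounded[of "[]" z "[]" C] by simp

lemma wnorm_cancel [simp]: "w \<in> words G \<Longrightarrow> wnorm G nu (w @ wbar w) = 0"
  by (rule wnorm_bounded_eq_0) (auto intro: nu_word_eval_cancel_le)

lemma wnorm_wbar [simp]:
  assumes "w \<in> words G"
  shows "wnorm G nu (wbar w) = wnorm G nu w"
proof -
  have "wnorm G nu (wbar x) \<le> wnorm G nu x + wnorm G nu (x @ wbar x)" if x: "x \<in> words G" for x
  proof (rule wnorm_le_of_bounded_defect[where C = 0])
    fix n
    have "word_eval G (wbar x) n = inv (word_eval G x n) \<otimes> word_eval G (x @ wbar x) n"
      using x by (simp add: word_eval_append m_assoc[symmetric])
    then show "nu (word_eval G (wbar x) n) \<le> nu (word_eval G x n) + nu (word_eval G (x @ wbar x) n) + 0"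
      using x nu_mult_le[of "inv (word_eval G x n)" "word_eval G (x @ wbar x) n"] by simp
  qed (use x in simp_all)
  then have "wnorm G nu (wbar x) \<le> wnorm G nu x" if "x \<in> words G" for x
    using that by simp
  then show ?thesis
    using assms by (metis order_antisym wbar_wbar wbar_words)
qed

text \<open>The evaluation of \<open>c w\<close> at \<open>n\<close> differs from that of \<open>w\<close> at \<open>\<lfloor>c n\<rfloor>\<close> by a bounded rounding error.\<close>
lemma wnorm_wscale_pos:
  assumes w: "w \<in> words G" and "0 < c"
  shows "wnorm G nu (wscale c w) = c * wnorm G nu w"
proof -
  define K where "K = 1 + (\<Sum>q\<leftarrow>w. \<bar>snd q\<bar>)"
  define m where "m n = nat \<lfloor>c * real n\<rfloor>" for n
  have wc: "fst ` set w \<subseteq> carrier G"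
    using w by (simp add: words_iff)
  have "pdist (word_eval G (wscale c w) n) (word_eval G w (m n)) \<le> K * (\<Sum>p\<leftarrow>w. nu (fst p))" for n
    unfolding word_eval_eq_pow_prod wscale_map map_map comp_def fst_conv snd_conv
  proof (rule pdist_pow_prod_exponents_le[OF wc])
    fix p :: "'a \<times> real"
    assume p: "p \<in> set w"
    have "\<bar>c * real n - real (m n)\<bar> \<le> 1"
      using \<open>0 < c\<close> unfolding m_def by (simp add: of_nat_nat) linarith
    then have "\<bar>snd p\<bar> * \<bar>c * real n - real (m n)\<bar> \<le> \<bar>snd p\<bar> * 1"
      by (intro mult_left_mono) auto
    moreover have "\<bar>c * snd p * real n - snd p * real (m n)\<bar> = \<bar>snd p\<bar> * \<bar>c * real n - real (m n)\<bar>"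
      by (simp add: abs_mult[symmetric] algebra_simps)
    moreover have "\<bar>snd p\<bar> \<le> (\<Sum>q\<leftarrow>w. \<bar>snd q\<bar>)"
      using p
    proof (induction w)
      case (Cons q w)
      have "0 \<le> (\<Sum>q\<leftarrow>w. \<bar>snd q\<bar>)"
        by (induction w) auto
      with Cons show ?case
        by auto
    qed simp
    ultimately show "\<bar>\<lfloor>c * snd p * real n\<rfloor> - \<lfloor>snd p * real (m n)\<rfloor>\<bar> \<le> K"
      using floor_diff_le[of "c * snd p * real n" "snd p * real (m n)"] unfolding K_def by linarith
  qed
  then have "\<bar>nu (word_eval G (wscale c w) n) - nu (word_eval G w (m n))\<bar> \<le> K * (\<Sum>p\<leftarrow>w. nu (fst p))"
    for n
    using w by (meson abs_nu_diff_le_pdist order_trans wscale_words word_eval_closed)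
  then have "(\<lambda>n. nu (word_eval G (wscale c w) n) / n) \<longlonglongrightarrow> c * wnorm G nu w"
    using word_seq_tendsto_wnorm[OF w] \<open>0 < c\<close> word_eval_0[OF w] unfolding m_def
    by (intro tendsto_over_n_rescale[where a = "\<lambda>k. nu (word_eval G w k)"])
      (simp_all add: word_seq_def[abs_def])
  moreover have "(\<lambda>n. nu (word_eval G (wscale c w) n) / n) \<longlonglongrightarrow> wnorm G nu (wscale c w)"
    using word_seq_tendsto_wnorm[of "wscale c w"] w by (simp add: word_seq_def[abs_def])
  ultimately show ?thesis
    using LIMSEQ_unique by blast
qed

lemma wnorm_wscale:
  assumes w: "w \<in> words G"
  shows "wnorm G nu (wscale c w) = \<bar>c\<bar> * wnorm G nu w"
proof -
  have "wnorm G nu (wscale (-1) w) = wnorm G nu (wbar w)"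
    using w by (intro wnorm_mset_eq) (simp_all add: wbar_eq_rev_wscale)
  then have neg_one: "wnorm G nu (wscale (-1) w) = wnorm G nu w"
    using w by simp
  consider "0 < c" | "c = 0" | "c < 0"
    by linarith
  then show ?thesis
  proof cases
    case 1
    then show ?thesis
      using w by (simp add: wnorm_wscale_pos)
  next
    case 2
    have "word_eval G (wscale 0 w) n = \<one>" for n
      using w by (induction w) (auto simp: wscale_map)
    then have "wnorm G nu (wscale 0 w) = 0"
      using w by (intro wnorm_bounded_eq_0[where C = 0]) auto
    with 2 show ?thesis
      by simp
  next
    case 3
    then have "wnorm G nu (wscale (- c) (wscale (-1) w)) = - c * wnorm G nu (wscale (-1) w)"
      using w by (intro wnorm_wscale_pos) simp_all
    then show ?thesis
      using 3 neg_one by simp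
  qed
qed

section \<open>The congruence on words\<close>

lemma wrel_iff: "(u, v) \<in> wrel G nu \<longleftrightarrow> u \<in> words G \<and> v \<in> words G \<and> wnorm G nu (u @ wbar v) = 0"
  by (simp add: wrel_def)

lemma wnorm_insert_cancel:
  "\<lbrakk>u \<in> words G; v \<in> words G; w \<in> words G\<rbrakk> \<Longrightarrow> wnorm G nu (u @ (wbar v @ v) @ w) = wnorm G nu (u @ w)"
  using nu_word_eval_cancel_le[of "wbar v"] by (intro wnorm_insert_bounded) auto

lemma wrel_sym: "(u, v) \<in> wrel G nu \<Longrightarrow> (v, u) \<in> wrel G nu"
  using wnorm_wbar[of "u @ wbar v"] by (auto simp: wrel_iff wbar_append)

lemma wrel_trans:
  assumes "(u, v) \<in> wrel G nu" "(v, w) \<in> wrel G nu"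
  shows "(u, w) \<in> wrel G nu"
proof -
  have words: "u \<in> words G" "v \<in> words G" "w \<in> words G"
    and null: "wnorm G nu (u @ wbar v) = 0" "wnorm G nu (v @ wbar w) = 0"
    using assms by (simp_all add: wrel_iff)
  have "wnorm G nu (u @ wbar w) = wnorm G nu ((u @ wbar v) @ (v @ wbar w))"
    using wnorm_insert_cancel[of u v "wbar w"] words by simp
  also have "\<dots> \<le> 0"
    using wnorm_append_le[of "u @ wbar v" "v @ wbar w"] words null by simp
  finally show ?thesis
    using wnorm_nonneg[of "u @ wbar w"] words by (simp add: wrel_iff)
qed

lemma equiv_wrel: "equiv (words G) (wrel G nu)"
proof (rule equivI)
  show "refl_on (words G) (wrel G nu)"
    by (auto simp: refl_on_def wrel_iff)
  show "sym (wrel G nu)"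
    using wrel_sym by (blast intro: symI)
  show "trans (wrel G nu)"
    using wrel_trans by (blast intro: transI)
qed (auto simp: wrel_def)

lemma wnorm_eq_if_wrel:
  assumes "(u, v) \<in> wrel G nu"
  shows "wnorm G nu u = wnorm G nu v"
proof -
  have "wnorm G nu x \<le> wnorm G nu y" if "(x, y) \<in> wrel G nu" for x y
  proof -
    have words: "x \<in> words G" "y \<in> words G" and null: "wnorm G nu (x @ wbar y) = 0"
      using that by (simp_all add: wrel_iff)
    have "wnorm G nu x = wnorm G nu ((x @ wbar y) @ y)"
      using wnorm_insert_cancel[of x y "[]"] words by simp
    also have "\<dots> \<le> wnorm G nu y"
      using wnorm_append_le[of "x @ wbar y" y] words null by simp
    finally show ?thesis .
  qed
  then show ?thesis
    using assms wrel_sym by (meson order_antisym)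
qed

lemma wrel_append:
  assumes "(u, u') \<in> wrel G nu" "(v, v') \<in> wrel G nu"
  shows "(u @ v, u' @ v') \<in> wrel G nu"
proof -
  have words: "u \<in> words G" "u' \<in> words G" "v \<in> words G" "v' \<in> words G"
    and null: "wnorm G nu (u @ wbar u') = 0" "wnorm G nu (v @ wbar v') = 0"
    using assms by (simp_all add: wrel_iff)
  have "wnorm G nu ((u @ v) @ wbar (u' @ v')) = wnorm G nu ((u @ wbar u') @ (v @ wbar v'))"
    using words by (intro wnorm_mset_eq) (auto simp: wbar_append)
  also have "\<dots> \<le> 0"
    using wnorm_append_le[of "u @ wbar u'" "v @ wbar v'"] words null by simp
  finally show ?thesis
    using wnorm_nonneg[of "(u @ v) @ wbar (u' @ v')"] words by (simp add: wrel_iff)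
qed

lemma wrel_wscale: "(u, v) \<in> wrel G nu \<Longrightarrow> (wscale c u, wscale c v) \<in> wrel G nu"
  using wnorm_wscale[of "u @ wbar v" c] by (simp add: wrel_iff wbar_wscale wscale_append)

lemma wrel_if_mset_eq:
  assumes "u \<in> words G" "v \<in> words G" "mset u = mset v"
  shows "(u, v) \<in> wrel G nu"
  using assms wnorm_mset_eq[of "u @ wbar v" "v @ wbar v"] by (simp add: wrel_iff)

lemma wrel_wscale_add:
  assumes w: "w \<in> words G"
  shows "(wscale (a + b) w, wscale a w @ wscale b w) \<in> wrel G nu"
proof -
  let ?T = "concat (map (\<lambda>p. [(fst p, (a + b) * snd p), (fst p, - (b * snd p)), (fst p, - (a * snd p))]) w)"
  have "?T \<in> words G"
    using w by (induction w) auto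
  moreover have "mset (wscale (a + b) w @ wbar (wscale a w @ wscale b w)) = mset ?T"
    by (induction w) (auto simp: wscale_map wbar_def)
  moreover have "wnorm G nu ?T = 0"
    using w nu_word_eval_zero_sum_triples[of w "\<lambda>p. (a + b) * snd p" "\<lambda>p. - (b * snd p)" "\<lambda>p. - (a * snd p)"]
    by (intro wnorm_bounded_eq_0) (auto simp: words_iff algebra_simps)
  ultimately show ?thesis
    using w wnorm_mset_eq[of "wscale (a + b) w @ wbar (wscale a w @ wscale b w)" ?T] by (simp add: wrel_iff)
qed

lemma wrel_add_inverse:
  assumes "w \<in> words G"
  shows "(w @ wscale (-1) w, []) \<in> wrel G nu"
proof -
  have "wnorm G nu (w @ wscale (-1) w) = wnorm G nu (w @ wbar w)"
    using assms by (intro wnorm_mset_eq) (simp_all add: wbar_eq_rev_wscale)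
  then show ?thesis
    using assms by (simp add: wrel_iff)
qed

abbreviation word_class :: "'a word \<Rightarrow> 'a word set" where
  "word_class u \<equiv> wrel G nu `` {u}"

lemma word_class_in_Anu: "u \<in> words G \<Longrightarrow> word_class u \<in> Anu G nu"
  unfolding Anu_def by (rule quotientI)

lemma word_class_eq_iff: "\<lbrakk>u \<in> words G; v \<in> words G\<rbrakk> \<Longrightarrow> word_class u = word_class v \<longleftrightarrow> (u, v) \<in> wrel G nu"
  by (rule eq_equiv_class_iff[OF equiv_wrel])

lemma word_class_eqI: "(u, v) \<in> wrel G nu \<Longrightarrow> word_class u = word_class v"
  using word_class_eq_iff by (auto simp: wrel_iff)

lemma rep_word_class: "u \<in> words G \<Longrightarrow> (rep (word_class u), u) \<in> wrel G nu"
  unfolding rep_def using equiv_class_self[OF equiv_wrel] by (metis Image_singleton_iff someI wrel_sym)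

lemma Anu_cases:
  assumes "X \<in> Anu G nu"
  obtains u where "u \<in> words G" "X = word_class u"
  using assms unfolding Anu_def by (blast elim: quotientE)

lemma qadd_word_class:
  "\<lbrakk>u \<in> words G; v \<in> words G\<rbrakk> \<Longrightarrow> qadd G nu (word_class u) (word_class v) = word_class (u @ v)"
  unfolding qadd_def by (intro word_class_eqI wrel_append rep_word_class)

lemma qscale_word_class: "u \<in> words G \<Longrightarrow> qscale G nu c (word_class u) = word_class (wscale c u)"
  unfolding qscale_def by (intro word_class_eqI wrel_wscale rep_word_class)

lemma qnorm_word_class: "u \<in> words G \<Longrightarrow> qnorm G nu (word_class u) = wnorm G nu u"
  unfolding qnorm_def by (intro wnorm_eq_if_wrel rep_word_class)

lemma qzero_eq: "qzero G nu = word_class []"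
  by (simp add: qzero_def)

lemma real_vector_space_Anu: "real_vector_space_on (Anu G nu) (qadd G nu) (qscale G nu) (qzero G nu)"
  unfolding real_vector_space_on_def
proof (intro conjI ballI allI)
  show "qzero G nu \<in> Anu G nu"
    by (simp add: qzero_eq word_class_in_Anu)
next
  fix X Y Z
  assume "X \<in> Anu G nu" "Y \<in> Anu G nu" "Z \<in> Anu G nu"
  then obtain u v w where u: "u \<in> words G" "X = word_class u" and v: "v \<in> words G" "Y = word_class v"
    and w: "w \<in> words G" "Z = word_class w"
    by (metis Anu_cases)
  show "qadd G nu (qadd G nu X Y) Z = qadd G nu X (qadd G nu Y Z)"
    using u v w by (simp add: qadd_word_class)
next
  fix X Y
  assume "X \<in> Anu G nu" "Y \<in> Anu G nu"
  then obtain u v where u: "u \<in> words G" "X = word_class u" and v: "v \<in> words G" "Y = word_class v"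
    by (metis Anu_cases)
  show "qadd G nu X Y \<in> Anu G nu"
    using u v by (simp add: qadd_word_class word_class_in_Anu)
  show "qadd G nu X Y = qadd G nu Y X"
    using u v by (simp add: qadd_word_class word_class_eqI wrel_if_mset_eq add.commute)
  fix c
  show "qscale G nu c (qadd G nu X Y) = qadd G nu (qscale G nu c X) (qscale G nu c Y)"
    using u v by (simp add: qadd_word_class qscale_word_class wscale_append)
next
  fix X
  assume "X \<in> Anu G nu"
  then obtain u where u: "u \<in> words G" "X = word_class u"
    by (metis Anu_cases)
  show "qadd G nu X (qzero G nu) = X" "qscale G nu 1 X = X"
    using u by (simp_all add: qzero_eq qadd_word_class qscale_word_class)
  show "\<exists>Y\<in>Anu G nu. qadd G nu X Y = qzero G nu"
    using u wrel_add_inverse[of u]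
    by (intro bexI[of _ "qscale G nu (-1) X"]) (simp_all add: qzero_eq qadd_word_class qscale_word_class
        word_class_eqI word_class_in_Anu)
  fix a b :: real
  show "qscale G nu a X \<in> Anu G nu"
    using u by (simp add: qscale_word_class word_class_in_Anu)
  show "qscale G nu (a + b) X = qadd G nu (qscale G nu a X) (qscale G nu b X)"
    using u wrel_wscale_add[of u a b] by (simp add: qadd_word_class qscale_word_class word_class_eqI)
  show "qscale G nu (a * b) X = qscale G nu a (qscale G nu b X)"
    using u by (simp add: qscale_word_class)
qed

lemma real_normed_space_Anu:
  "real_normed_space_on (Anu G nu) (qadd G nu) (qscale G nu) (qzero G nu) (qnorm G nu)"
  unfolding real_normed_space_on_def
proof (intro conjI ballI allI real_vector_space_Anu)
  fix X
  assume "X \<in> Anu G nu"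
  then obtain u where u: "u \<in> words G" "X = word_class u"
    by (rule Anu_cases)
  show "0 \<le> qnorm G nu X"
    using u by (simp add: qnorm_word_class wnorm_nonneg)
  show "qnorm G nu X = 0 \<longleftrightarrow> X = qzero G nu"
    using u by (simp add: qnorm_word_class qzero_eq word_class_eq_iff wrel_iff)
  fix c
  show "qnorm G nu (qscale G nu c X) = \<bar>c\<bar> * qnorm G nu X"
    using u by (simp add: qscale_word_class qnorm_word_class wnorm_wscale)
next
  fix X Y
  assume "X \<in> Anu G nu" "Y \<in> Anu G nu"
  then obtain u v where u: "u \<in> words G" "X = word_class u" and v: "v \<in> words G" "Y = word_class v"
    by (metis Anu_cases)
  show "qnorm G nu (qadd G nu X Y) \<le> qnorm G nu X + qnorm G nu Y"
    using u v by (simp add: qadd_word_class qnorm_word_class wnorm_append_le)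
qed

end

theorem proposition2p3:
  fixes G :: "('a, 'b) monoid_scheme" and \<nu> :: "'a \<Rightarrow> real"
  assumes "group G"
    and "FM G"
    and "conj_inv_pseudo_norm G \<nu>"
  shows "(\<forall>w\<in>words G. convergent (word_seq G \<nu> w))
    \<and> equiv (words G) (wrel G \<nu>)
    \<and> (\<forall>g\<in>words G. \<forall>g'\<in>words G. \<forall>h\<in>words G. \<forall>h'\<in>words G.
          (g, g') \<in> wrel G \<nu> \<longrightarrow> (h, h') \<in> wrel G \<nu> \<longrightarrow> (g @ h, g' @ h') \<in> wrel G \<nu>)
    \<and> (\<forall>c. \<forall>g\<in>words G. \<forall>g'\<in>words G.
          (g, g') \<in> wrel G \<nu> \<longrightarrow> (wscale c g, wscale c g') \<in> wrel G \<nu>)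
    \<and> (\<forall>g\<in>words G. \<forall>g'\<in>words G. (g, g') \<in> wrel G \<nu> \<longrightarrow> wnorm G \<nu> g = wnorm G \<nu> g')
    \<and> real_normed_space_on (Anu G \<nu>) (qadd G \<nu>) (qscale G \<nu>) (qzero G \<nu>) (qnorm G \<nu>)"
proof -
  interpret FM_pseudo_normed_group G \<nu>
    using assms by (simp add: FM_pseudo_normed_group_def FM_pseudo_normed_group_axioms_def
        pseudo_normed_group_def pseudo_normed_group_axioms_def)
  show ?thesis
    using convergent_word_seq equiv_wrel wrel_append wrel_wscale wnorm_eq_if_wrel real_normed_space_Anu
    by blast
qed

end
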